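(* Let $\mathcal{M}:R\to A_2B_2$ be a quantum channel with $B_2$ classical such that for every register $R'$ and every state $\omega_{RR'}$, $\rho_{A_2B_2R'}=\mathcal{M}(\omega_{RR'})$ satisfies $\rho_{B_2R'}=\rho_{B_2}\otimes\omega_{R'}$. Let $\omega_{A_1B_1R}$ be a state and $\rho_{A_1B_1A_2B_2}=\mathcal{M}(\omega_{A_1B_1R})$. Let $\nu_{A_1B_1A_2B_2}$ be any state with $\nu_{A_2B_2|A_1B_1}=\rho_{A_2B_2|A_1B_1}$ and $\mathrm{supp}(\nu_{A_1B_1})=\mathrm{supp}(\rho_{A_1B_1})$. Then there exists a state $\omega'_{A_1B_1R}$ with $\mathcal{M}(\omega'_{A_1B_1R})=\nu_{A_1B_1A_2B_2}$.
   Context: All spaces finite-dimensional. For a state $\rho_{XY}$, the conditional operator is $\rho_{X|Y}=\rho_Y^{-1/2}\rho_{XY}\rho_Y^{-1/2}$, with the inverse taken on the support of $\rho_Y$. Channels act as the identity on systems they do not act on. *)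

theory Defs
  imports "Jordan_Normal_Form.Schur_Decomposition"
begin

(* Conventions: a register of dimension d is C^d; operators are complex d x d matrices.
   Tensor products use the Kronecker convention: for X (x) Y, index (i,j) of X and
   (k,l) of Y become index (i*dY + k, j*dY + l). *)

definition mtrace :: "complex mat \<Rightarrow> complex" where
  "mtrace A = (\<Sum>i<dim_row A. A $$ (i,i))"

definition psd :: "nat \<Rightarrow> complex mat \<Rightarrow> bool" where
  "psd n A \<longleftrightarrow> A \<in> carrier_mat n n \<and>
     (\<forall>v \<in> carrier_vec n. Im (conjugate v \<bullet> (A *\<^sub>v v)) = 0 \<and> Re (conjugate v \<bullet> (A *\<^sub>v v)) \<ge> 0)"

definition density :: "nat \<Rightarrow> complex mat \<Rightarrow> bool" where
  "density n A \<longleftrightarrow> psd n A \<and> mtrace A = 1"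

definition tensor_mat :: "complex mat \<Rightarrow> complex mat \<Rightarrow> complex mat" where
  "tensor_mat A B = mat (dim_row A * dim_row B) (dim_col A * dim_col B)
     (\<lambda>(i,j). A $$ (i div dim_row B, j div dim_col B) * B $$ (i mod dim_row B, j mod dim_col B))"

definition ptrace_right :: "nat \<Rightarrow> nat \<Rightarrow> complex mat \<Rightarrow> complex mat" where
  "ptrace_right dX dY A = mat dX dX (\<lambda>(i,j). \<Sum>k<dY. A $$ (i*dY + k, j*dY + k))"

definition ptrace_left :: "nat \<Rightarrow> nat \<Rightarrow> complex mat \<Rightarrow> complex mat" where
  "ptrace_left dX dY A = mat dY dY (\<lambda>(i,j). \<Sum>k<dX. A $$ (k*dY + i, k*dY + j))"

(* trace out the middle factor Y of X (x) Y (x) Z, leaving X (x) Z *)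
definition ptrace_mid :: "nat \<Rightarrow> nat \<Rightarrow> nat \<Rightarrow> complex mat \<Rightarrow> complex mat" where
  "ptrace_mid dX dY dZ A = mat (dX*dZ) (dX*dZ) (\<lambda>(i,j). \<Sum>k<dY.
      A $$ (((i div dZ)*dY + k)*dZ + i mod dZ, ((j div dZ)*dY + k)*dZ + j mod dZ))"

(* id_n (x) M applied to an operator on C^n (x) C^dI (blockwise application of M);
   the untouched register comes first. *)
definition ext_chan :: "nat \<Rightarrow> nat \<Rightarrow> nat \<Rightarrow> (complex mat \<Rightarrow> complex mat) \<Rightarrow> complex mat \<Rightarrow> complex mat" where
  "ext_chan n dI dO M X = mat (n*dO) (n*dO) (\<lambda>(i,j).
      M (mat dI dI (\<lambda>(k,l). X $$ ((i div dO)*dI + k, (j div dO)*dI + l))) $$ (i mod dO, j mod dO))"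

definition quantum_channel :: "nat \<Rightarrow> nat \<Rightarrow> (complex mat \<Rightarrow> complex mat) \<Rightarrow> bool" where
  "quantum_channel dI dO M \<longleftrightarrow>
     (\<forall>X \<in> carrier_mat dI dI. M X \<in> carrier_mat dO dO) \<and>
     (\<forall>X \<in> carrier_mat dI dI. \<forall>Y \<in> carrier_mat dI dI. M (X + Y) = M X + M Y) \<and>
     (\<forall>X \<in> carrier_mat dI dI. \<forall>c. M (c \<cdot>\<^sub>m X) = c \<cdot>\<^sub>m M X) \<and>
     (\<forall>X \<in> carrier_mat dI dI. mtrace (M X) = mtrace X) \<and>
     (\<forall>n X. psd (n*dI) X \<longrightarrow> psd (n*dO) (ext_chan n dI dO M X))"

definition unitary_mat :: "nat \<Rightarrow> complex mat \<Rightarrow> bool" where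
  "unitary_mat n U \<longleftrightarrow> U \<in> carrier_mat n n \<and> mat_adjoint U * U = 1\<^sub>m n \<and> U * mat_adjoint U = 1\<^sub>m n"

definition mat_fun :: "(real \<Rightarrow> real) \<Rightarrow> complex mat \<Rightarrow> complex mat" where
  "mat_fun f A = (SOME B. \<exists>U d. unitary_mat (dim_row A) U \<and>
      A = U * mat_diag (dim_row A) (\<lambda>i. complex_of_real (d i)) * mat_adjoint U \<and>
      B = U * mat_diag (dim_row A) (\<lambda>i. complex_of_real (f (d i))) * mat_adjoint U)"

definition inv_sqrt_supp :: "complex mat \<Rightarrow> complex mat" where
  "inv_sqrt_supp A = mat_fun (\<lambda>x. if x > 0 then 1 / sqrt x else 0) A"

(* conditional operator rho_{X|Y} for rho on Y (x) X (conditioning register Y first) *)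
definition cond_op :: "nat \<Rightarrow> nat \<Rightarrow> complex mat \<Rightarrow> complex mat" where
  "cond_op dY dX rho =
     (let S = tensor_mat (inv_sqrt_supp (ptrace_right dY dX rho)) (1\<^sub>m dX) in S * rho * S)"

definition supp :: "complex mat \<Rightarrow> complex vec set" where
  "supp A = {A *\<^sub>v v | v. v \<in> carrier_vec (dim_col A)}"

(* the output register B (second factor of A (x) B) is classical: outputs are
   block diagonal w.r.t. the computational basis of B *)
definition classical_output_B :: "nat \<Rightarrow> nat \<Rightarrow> nat \<Rightarrow> (complex mat \<Rightarrow> complex mat) \<Rightarrow> bool" where
  "classical_output_B dI dA dB M \<longleftrightarrow>
     (\<forall>X. density dI X \<longrightarrow> (\<forall>i j. i < dA*dB \<longrightarrow> j < dA*dB \<longrightarrow> i mod dB \<noteq> j mod dB \<longrightarrow> M X $$ (i,j) = 0))"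

end

(* Write \<nu>_A and \<rho>_A for the marginals of \<nu> and \<rho> on A1B1 and take
   \<omega>' = (K \<otimes> 1) \<omega> (K \<otimes> 1)^H with K = \<nu>_A^(1/2) \<rho>_A^(-1/2).  Since M acts on R only,
   M(\<omega>') = (K \<otimes> 1) \<rho> (K^H \<otimes> 1) = (\<nu>_A^(1/2) \<otimes> 1) \<rho>_(A2B2|A1B1) (\<nu>_A^(1/2) \<otimes> 1), and
   replacing \<rho>_(A2B2|A1B1) by \<nu>_(A2B2|A1B1) turns this into (P \<otimes> 1) \<nu> (P \<otimes> 1), where P is
   the support projection of \<nu>_A.  This equals \<nu>: for u in the kernel of \<nu>_A every vector
   u \<otimes> e_q is a null vector of the positive semidefinite \<nu>.  Finally \<omega>' is positive by
   congruence and has trace 1 because M preserves the trace. *)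

theory Submission
  imports Defs
begin

lemma index_mult_mat_sum:
  assumes "A \<in> carrier_mat r n" "B \<in> carrier_mat n c" "i < r" "j < c"
  shows "(A * B) $$ (i,j) = (\<Sum>k<n. A $$ (i,k) * B $$ (k,j))"
  using assms by (simp add: scalar_prod_def lessThan_atLeast0)

lemma index_mult_mat_vec_sum:
  "A \<in> carrier_mat r n \<Longrightarrow> v \<in> carrier_vec n \<Longrightarrow> i < r \<Longrightarrow> (A *\<^sub>v v) $ i = (\<Sum>k<n. A $$ (i,k) * v $ k)"
  by (simp add: scalar_prod_def lessThan_atLeast0)

lemma mat_adjoint_dim[simp]:
  "dim_row (mat_adjoint A) = dim_col A" "dim_col (mat_adjoint A) = dim_row A"
  unfolding mat_adjoint_def by auto

lemma mat_adjoint_carrier[simp, intro]: "A \<in> carrier_mat r c \<Longrightarrow> mat_adjoint A \<in> carrier_mat c r"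
  unfolding carrier_mat_def by simp

lemma index_mat_adjoint[simp]:
  fixes A :: "complex mat"
  shows "i < dim_col A \<Longrightarrow> j < dim_row A \<Longrightarrow> mat_adjoint A $$ (i,j) = cnj (A $$ (j,i))"
  unfolding mat_adjoint_def by (simp add: mat_of_rows_def)

lemma mat_adjoint_adjoint[simp]: "mat_adjoint (mat_adjoint A) = (A :: complex mat)"
  by (rule eq_matI) simp_all

lemma mat_adjoint_mult:
  fixes A B :: "complex mat"
  assumes A: "A \<in> carrier_mat r n" and B: "B \<in> carrier_mat n c"
  shows "mat_adjoint (A * B) = mat_adjoint B * mat_adjoint A"
proof (rule eq_matI)
  fix i j assume "i < dim_row (mat_adjoint B * mat_adjoint A)" "j < dim_col (mat_adjoint B * mat_adjoint A)"
  then have ij: "i < c" "j < r" using assms by auto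
  have "mat_adjoint (A * B) $$ (i,j) = cnj ((A * B) $$ (j,i))" using ij assms by simp
  also have "\<dots> = (\<Sum>k<n. cnj (A $$ (j,k)) * cnj (B $$ (k,i)))"
    by (subst index_mult_mat_sum[OF A B ij(2) ij(1)]) (simp add: cnj_sum)
  also have "\<dots> = (mat_adjoint B * mat_adjoint A) $$ (i,j)"
    by (subst index_mult_mat_sum[OF mat_adjoint_carrier[OF B] mat_adjoint_carrier[OF A] ij])
      (rule sum.cong, use ij in \<open>auto simp: carrier_matD[OF A] carrier_matD[OF B] mult.commute\<close>)
  finally show "mat_adjoint (A * B) $$ (i,j) = (mat_adjoint B * mat_adjoint A) $$ (i,j)" .
qed (use assms in simp_all)

lemma mat_adjoint_one[simp]: "mat_adjoint (1\<^sub>m n) = (1\<^sub>m n :: complex mat)"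
  by (rule eq_matI) (auto simp: one_mat_def)

lemma mat_adjoint_zero[simp]: "mat_adjoint (0\<^sub>m r c) = (0\<^sub>m c r :: complex mat)"
  by (rule eq_matI) auto

lemma mat_adjoint_diag_real[simp]:
  "mat_adjoint (mat_diag n (\<lambda>i. complex_of_real (d i))) = mat_diag n (\<lambda>i. complex_of_real (d i))"
  by (rule eq_matI) (auto simp: mat_diag_def)

lemma mat_adjoint_four_block:
  fixes A B C D :: "complex mat"
  assumes "A \<in> carrier_mat ra ca" "B \<in> carrier_mat ra cb" "C \<in> carrier_mat rb ca" "D \<in> carrier_mat rb cb"
  shows "mat_adjoint (four_block_mat A B C D) =
    four_block_mat (mat_adjoint A) (mat_adjoint C) (mat_adjoint B) (mat_adjoint D)"
  by (rule eq_matI) (use assms in auto)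

lemma row_mat_adjoint: "i < dim_col A \<Longrightarrow> row (mat_adjoint A) i = conjugate (col A i)"
  by (rule eq_vecI) (simp_all add: mat_adjoint_def)

lemma scalar_prod_mat_adjoint:
  fixes B :: "complex mat"
  assumes B: "B \<in> carrier_mat m n" and v: "v \<in> carrier_vec m" and y: "y \<in> carrier_vec n"
  shows "conjugate v \<bullet> (B *\<^sub>v y) = conjugate (mat_adjoint B *\<^sub>v v) \<bullet> y"
proof -
  have "conjugate v \<bullet> (B *\<^sub>v y) = (\<Sum>i<m. \<Sum>j<n. cnj (v$i) * B $$ (i,j) * y$j)"
    using assms by (simp add: scalar_prod_def lessThan_atLeast0 index_mult_mat_vec_sum[OF B y]
        sum_distrib_left mult.assoc del: index_mult_mat_vec)
  also have "\<dots> = (\<Sum>j<n. cnj ((mat_adjoint B *\<^sub>v v) $ j) * y $ j)"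
    using assms by (subst sum.swap)
      (simp add: index_mult_mat_vec_sum[of _ n m] cnj_sum sum_distrib_left mult_ac del: index_mult_mat_vec)
  also have "\<dots> = conjugate (mat_adjoint B *\<^sub>v v) \<bullet> y"
    using assms by (simp add: scalar_prod_def lessThan_atLeast0)
  finally show ?thesis .
qed

lemma sum_lessThan_mult_nat: "(\<Sum>x<n*m. f x) = (\<Sum>a<n. \<Sum>k<m. f (a*m+k :: nat))"
proof (induction n)
  case (Suc n)
  have split: "{..<Suc n*m} = {..<n*m} \<union> {n*m..<n*m+m}" by auto
  have "(\<Sum>x<Suc n*m. f x) = (\<Sum>x<n*m. f x) + (\<Sum>x\<in>{n*m..<n*m+m}. f x)"
    unfolding split by (rule sum.union_disjoint) auto
  also have "(\<Sum>x\<in>{n*m..<n*m+m}. f x) = (\<Sum>k<m. f (n*m+k))"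
    using sum.shift_bounds_nat_ivl[of f 0 "n*m" m] by (simp add: atLeast0LessThan add.commute)
  finally show ?case using Suc by simp
qed simp

lemma mult_add_less_mult: assumes "a < n" "k < m" shows "a*m + k < n*(m::nat)"
proof -
  have "a*m + k < Suc a * m" using assms by simp
  also have "\<dots> \<le> n*m" using assms by (intro mult_right_mono) simp_all
  finally show ?thesis .
qed

lemma div_mod_less_mult:
  assumes "(x::nat) < n*m" shows "x div m < n" "x mod m < m"
proof -
  from assms have "m > 0" by (cases m) auto
  then show "x mod m < m" by simp
  show "x div m < n" using assms by (simp add: less_mult_imp_div_less)
qed

lemma sum_lessThan_mult_mod_eq:
  assumes "p < (m::nat)"
  shows "(\<Sum>x<n*m. if x mod m = p then g x else 0) = (\<Sum>a<n. g (a*m+p) :: 'a :: comm_monoid_add)"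
  using assms by (simp add: sum_lessThan_mult_nat sum.delta)

lemma sum_swap_pairs:
  "(\<Sum>k\<in>A. \<Sum>l\<in>B. \<Sum>c\<in>C. \<Sum>e\<in>D. f k l c e) = (\<Sum>c\<in>C. \<Sum>e\<in>D. \<Sum>k\<in>A. \<Sum>l\<in>B. f k l c e)"
proof -
  have "(\<Sum>k\<in>A. \<Sum>l\<in>B. \<Sum>c\<in>C. \<Sum>e\<in>D. f k l c e) = (\<Sum>k\<in>A. \<Sum>c\<in>C. \<Sum>l\<in>B. \<Sum>e\<in>D. f k l c e)"
    by (rule sum.cong[OF refl], rule sum.swap)
  also have "\<dots> = (\<Sum>c\<in>C. \<Sum>k\<in>A. \<Sum>l\<in>B. \<Sum>e\<in>D. f k l c e)"
    by (rule sum.swap)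
  also have "\<dots> = (\<Sum>c\<in>C. \<Sum>k\<in>A. \<Sum>e\<in>D. \<Sum>l\<in>B. f k l c e)"
    by (rule sum.cong[OF refl], rule sum.cong[OF refl], rule sum.swap)
  also have "\<dots> = (\<Sum>c\<in>C. \<Sum>e\<in>D. \<Sum>k\<in>A. \<Sum>l\<in>B. f k l c e)"
    by (rule sum.cong[OF refl], rule sum.swap)
  finally show ?thesis .
qed

lemma eq_mat_by_blocks:
  assumes A: "A \<in> carrier_mat (n*d) (n*d)" and B: "B \<in> carrier_mat (n*d) (n*d)"
    and e: "\<And>a b p q. a < n \<Longrightarrow> b < n \<Longrightarrow> p < d \<Longrightarrow> q < d \<Longrightarrow> A $$ (a*d+p, b*d+q) = B $$ (a*d+p, b*d+q)"
  shows "A = B"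
proof (rule eq_matI)
  fix i j assume "i < dim_row B" "j < dim_col B"
  then have "i < n*d" "j < n*d" using B by simp_all
  then show "A $$ (i,j) = B $$ (i,j)"
    using e[of "i div d" "j div d" "i mod d" "j mod d"] by (simp add: div_mod_less_mult)
qed (use A B in simp_all)

definition hermitian :: "nat \<Rightarrow> complex mat \<Rightarrow> bool" where
  "hermitian n A \<longleftrightarrow> A \<in> carrier_mat n n \<and> mat_adjoint A = A"

lemma hermitian_cnj_entry:
  assumes "hermitian n A" "i < n" "j < n" shows "A $$ (j,i) = cnj (A $$ (i,j))"
proof -
  have A: "A \<in> carrier_mat n n" and AH: "mat_adjoint A = A" using assms(1) unfolding hermitian_def by auto
  have "mat_adjoint A $$ (j,i) = cnj (A $$ (i,j))" using assms(2,3) by (simp add: carrier_matD[OF A])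
  then show ?thesis unfolding AH .
qed

lemma hermitian_diag_real:
  assumes "hermitian n A" "i < n" shows "Im (A $$ (i,i)) = 0"
proof -
  have "Im (A $$ (i,i)) = Im (cnj (A $$ (i,i)))" using hermitian_cnj_entry[OF assms(1) assms(2) assms(2)] by (rule arg_cong)
  then show ?thesis by simp
qed

lemma hermitianI:
  assumes A: "A \<in> carrier_mat n n" and e: "\<And>i j. i < n \<Longrightarrow> j < n \<Longrightarrow> A $$ (j,i) = cnj (A $$ (i,j))"
  shows "hermitian n A"
  unfolding hermitian_def
proof (intro conjI A eq_matI)
  fix i j assume "i < dim_row A" "j < dim_col A"
  then show "mat_adjoint A $$ (i,j) = A $$ (i,j)" using A e[of j i] by simp
qed (use A in simp_all)

lemma hermitian_unitary_conj:
  assumes "hermitian n A" and U: "U \<in> carrier_mat n m"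
  shows "hermitian m (mat_adjoint U * A * U)"
proof -
  have A: "A \<in> carrier_mat n n" and AH: "mat_adjoint A = A" using assms(1) unfolding hermitian_def by auto
  have UHA: "mat_adjoint U * A \<in> carrier_mat m n" using mult_carrier_mat[OF mat_adjoint_carrier[OF U] A] .
  have "mat_adjoint (mat_adjoint U * A * U) = mat_adjoint U * mat_adjoint (mat_adjoint U * A)"
    by (simp add: mat_adjoint_mult[OF UHA U])
  also have "\<dots> = mat_adjoint U * A * U"
    using A U by (simp add: mat_adjoint_mult[OF mat_adjoint_carrier[OF U] A] AH assoc_mult_mat[of _ m n _ n])
  finally show ?thesis unfolding hermitian_def using UHA U by simp
qed

lemma unitary_matD:
  assumes "unitary_mat n U"
  shows "U \<in> carrier_mat n n" "mat_adjoint U * U = 1\<^sub>m n" "U * mat_adjoint U = 1\<^sub>m n"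
  using assms unfolding unitary_mat_def by auto

lemma unitary_matI:
  assumes U: "U \<in> carrier_mat n n" and "mat_adjoint U * U = 1\<^sub>m n"
  shows "unitary_mat n U"
  using assms mat_mult_left_right_inverse[OF mat_adjoint_carrier[OF U] U] unfolding unitary_mat_def by auto

lemma unitary_mult_cancel:
  assumes "unitary_mat n U" "X \<in> carrier_mat n k"
  shows "U * (mat_adjoint U * X) = X" "mat_adjoint U * (U * X) = X"
proof -
  note U = unitary_matD[OF assms(1)]
  show "U * (mat_adjoint U * X) = X"
    using assoc_mult_mat[OF U(1) mat_adjoint_carrier[OF U(1)] assms(2)] U(3) assms(2) by simp
  show "mat_adjoint U * (U * X) = X"
    using assoc_mult_mat[OF mat_adjoint_carrier[OF U(1)] U(1) assms(2)] U(2) assms(2) by simp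
qed

lemma unitary_mat_mult:
  assumes "unitary_mat n U" "unitary_mat n V" shows "unitary_mat n (U * V)"
proof (rule unitary_matI)
  note U = unitary_matD[OF assms(1)] and V = unitary_matD[OF assms(2)]
  show "U * V \<in> carrier_mat n n" using U V by simp
  show "mat_adjoint (U * V) * (U * V) = 1\<^sub>m n"
    using U V by (simp add: mat_adjoint_mult[OF U(1) V(1)] unitary_mult_cancel[OF assms(1)]
        assoc_mult_mat[of _ n n _ n _ n] mult_carrier_mat[of _ n n _ n])
qed

lemma unitary_conj_cancel:
  assumes "unitary_mat n U" "A \<in> carrier_mat n n"
  shows "U * (mat_adjoint U * A * U) * mat_adjoint U = A"
    and "mat_adjoint U * (U * A * mat_adjoint U) * U = A"
  using assms unitary_matD[OF assms(1)]
  by (simp_all add: unitary_mult_cancel[OF assms(1)] assoc_mult_mat[of _ n n _ n _ n] mult_carrier_mat[of _ n n _ n])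

lemma unitary_of_orthonormal_cols:
  assumes W: "W \<in> carrier_mat n n"
    and orth: "\<And>i j. i < n \<Longrightarrow> j < n \<Longrightarrow> col W j \<bullet>c col W i = (if i = j then 1 else 0)"
  shows "unitary_mat n W"
proof (rule unitary_matI[OF W], rule eq_matI)
  fix i j assume "i < dim_row (1\<^sub>m n :: complex mat)" "j < dim_col (1\<^sub>m n :: complex mat)"
  then have ij: "i < n" "j < n" by simp_all
  have "(mat_adjoint W * W) $$ (i,j) = conjugate (col W i) \<bullet> col W j"
    using W ij by (simp add: row_mat_adjoint)
  also have "\<dots> = col W j \<bullet>c col W i"
    using W ij by (simp add: conjugate_vec_sprod_comm[where v = "col W j" and w = "col W i" and n = n])
  finally show "(mat_adjoint W * W) $$ (i,j) = 1\<^sub>m n $$ (i,j)" using orth[OF ij] ij by simp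
qed (use W in simp_all)

lemma unitary_rows_orthonormal:
  assumes "unitary_mat n U" "e < n" "b < n"
  shows "(\<Sum>k<n. U $$ (e,k) * cnj (U $$ (b,k))) = (if e = b then 1 else 0)"
proof -
  note Uc = unitary_matD[OF assms(1)]
  have "(U * mat_adjoint U) $$ (e,b) = (\<Sum>k<n. U $$ (e,k) * cnj (U $$ (b,k)))"
    using index_mult_mat_sum[OF Uc(1) mat_adjoint_carrier[OF Uc(1)] assms(2,3)] Uc(1) assms(2,3) by simp
  then show ?thesis using Uc(3) assms(2,3) by simp
qed

lemma unitary_diag_carrier: "U \<in> carrier_mat n n \<Longrightarrow> U * mat_diag n f * mat_adjoint U \<in> carrier_mat n n"
  using mult_carrier_mat[OF mult_carrier_mat[OF _ mat_diag_dim] mat_adjoint_carrier] by blast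

lemma index_unitary_diag:
  assumes U: "U \<in> carrier_mat n n" and ij: "i < n" "j < n"
  shows "(U * mat_diag n f * mat_adjoint U) $$ (i,j) = (\<Sum>k<n. U $$ (i,k) * f k * cnj (U $$ (j,k)))"
proof -
  have "(U * mat_diag n f * mat_adjoint U) $$ (i,j) = (\<Sum>k<n. (U * mat_diag n f) $$ (i,k) * mat_adjoint U $$ (k,j))"
    by (rule index_mult_mat_sum[OF mult_carrier_mat[OF U mat_diag_dim] mat_adjoint_carrier[OF U] ij])
  also have "\<dots> = (\<Sum>k<n. U $$ (i,k) * f k * cnj (U $$ (j,k)))"
    by (intro sum.cong refl) (use U ij in \<open>simp add: mat_diag_mult_right[OF U]\<close>)
  finally show ?thesis .
qed

lemma mat_adjoint_unitary_diag_real: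
  assumes U: "U \<in> carrier_mat n n"
  shows "mat_adjoint (U * mat_diag n (\<lambda>i. complex_of_real (d i)) * mat_adjoint U) =
    U * mat_diag n (\<lambda>i. complex_of_real (d i)) * mat_adjoint U"
proof -
  let ?D = "mat_diag n (\<lambda>i. complex_of_real (d i))"
  have "mat_adjoint (U * ?D * mat_adjoint U) = mat_adjoint (mat_adjoint U) * mat_adjoint (U * ?D)"
    by (rule mat_adjoint_mult[OF mult_carrier_mat[OF U mat_diag_dim] mat_adjoint_carrier[OF U]])
  also have "\<dots> = U * (?D * mat_adjoint U)" by (simp add: mat_adjoint_mult[OF U mat_diag_dim])
  also have "\<dots> = U * ?D * mat_adjoint U" using assoc_mult_mat[OF U mat_diag_dim mat_adjoint_carrier[OF U]] by simp
  finally show ?thesis .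
qed

lemma unitary_diag_mult:
  assumes "unitary_mat n U"
  shows "(U * mat_diag n f * mat_adjoint U) * (U * mat_diag n g * mat_adjoint U) =
    U * mat_diag n (\<lambda>i. f i * g i) * mat_adjoint U"
  using unitary_matD[OF assms]
  by (simp add: unitary_mult_cancel[OF assms, where k = n] assoc_mult_mat[of _ n n _ n _ n]
      mult_carrier_mat[of _ n n _ n] flip: mat_diag_diag)

section \<open>The spectral theorem\<close>

definition cnormalize :: "complex vec \<Rightarrow> complex vec" where
  "cnormalize w = complex_of_real (1 / sqrt (Re (w \<bullet>c w))) \<cdot>\<^sub>v w"

lemma cnormalize_carrier[simp]: "w \<in> carrier_vec n \<Longrightarrow> cnormalize w \<in> carrier_vec n"
  unfolding cnormalize_def by simp

lemma cscalar_prod_cnormalize: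
  assumes "v \<in> carrier_vec n" "w \<in> carrier_vec n"
  shows "cnormalize v \<bullet>c cnormalize w =
    complex_of_real (1 / sqrt (Re (v \<bullet>c v)) * (1 / sqrt (Re (w \<bullet>c w)))) * (v \<bullet>c w)"
  using assms unfolding cnormalize_def
  by (simp add: conjugate_smult_vec scalar_prod_smult_distrib[of _ n] smult_scalar_prod_distrib[of _ n])

lemma cscalar_square_real:
  fixes w :: "complex vec"
  shows "w \<bullet>c w = complex_of_real (Re (w \<bullet>c w))" "Re (w \<bullet>c w) \<ge> 0"
  using conjugate_square_ge_0_vec[of w] by (auto simp: less_eq_complex_def complex_eq_iff)

lemma cnormalize_unit:
  assumes w: "w \<in> carrier_vec n" and "w \<noteq> 0\<^sub>v n"
  shows "cnormalize w \<bullet>c cnormalize w = 1"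
proof -
  define r where "r = Re (w \<bullet>c w)"
  have ww: "w \<bullet>c w = complex_of_real r" unfolding r_def by (rule cscalar_square_real(1))
  have "r \<noteq> 0" using assms ww by auto
  then have "r > 0" using cscalar_square_real(2)[of w] unfolding r_def by linarith
  then show ?thesis unfolding cscalar_prod_cnormalize[OF w w] ww by (simp flip: of_real_mult)
qed

lemma cnormalize_id: "w \<bullet>c w = 1 \<Longrightarrow> cnormalize w = w"
  unfolding cnormalize_def by simp

lemma corthogonal_basis_with_head:
  fixes v :: "complex vec"
  assumes v: "v \<in> carrier_vec n" and v0: "v \<noteq> 0\<^sub>v n"
  shows "\<exists>ws. set ws \<subseteq> carrier_vec n \<and> corthogonal ws \<and> length ws = n \<and> ws ! 0 = v"
proof -
  interpret cof_vec_space n "TYPE(complex)" .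
  define b where "b = basis_completion v"
  note bc = basis_completion[OF v v0, folded b_def]
  define ws where "ws = gram_schmidt n b"
  note gs = gram_schmidt_result[OF bc(2) bc(4) bc(5) ws_def]
  have "b \<noteq> []" using bc(6,7) v v0 by (cases b) auto
  then have "b = v # tl b" using bc(7) by (cases b) simp_all
  then have "hd ws = v" unfolding ws_def by (metis gram_schmidt_hd v)
  moreover have "ws \<noteq> []" using gs(4) bc(6) \<open>b \<noteq> []\<close> by (cases ws) (auto simp: ws_def)
  ultimately have "ws ! 0 = v" by (cases ws) simp_all
  then show ?thesis using gs(2,3,4) bc(6) by auto
qed

lemma unitary_with_first_col:
  fixes v :: "complex vec"
  assumes v: "v \<in> carrier_vec n" and v1: "v \<bullet>c v = 1"
  shows "\<exists>W. unitary_mat n W \<and> col W 0 = v"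
proof -
  have v0: "v \<noteq> 0\<^sub>v n" using v1 by auto
  obtain ws where ws: "set ws \<subseteq> carrier_vec n" "corthogonal ws" and len: "length ws = n"
    and ws0: "ws ! 0 = v" using corthogonal_basis_with_head[OF v v0] by blast
  have n0: "0 < n" using v v0 by (cases n) auto
  have wsk: "ws ! k \<in> carrier_vec n" "ws ! k \<noteq> 0\<^sub>v n" if "k < n" for k
    using ws that len corthogonalD[OF ws(2), of k k] by auto
  define W where "W = mat_of_cols n (map cnormalize ws)"
  have W: "W \<in> carrier_mat n n" unfolding W_def using mat_of_cols_carrier(1)[of n "map cnormalize ws"] len by simp
  have colW: "col W k = cnormalize (ws ! k)" if "k < n" for k
    unfolding W_def using that len wsk(1)[OF that] by simp
  have "unitary_mat n W"
  proof (rule unitary_of_orthonormal_cols[OF W])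
    fix i j assume ij: "i < n" "j < n"
    show "col W j \<bullet>c col W i = (if i = j then 1 else 0)"
    proof (cases "i = j")
      case True
      then show ?thesis using cnormalize_unit[OF wsk[OF ij(1)]] by (simp add: colW ij)
    next
      case False
      then show ?thesis using corthogonalD[OF ws(2), of j i] len ij
        by (simp add: colW cscalar_prod_cnormalize[OF wsk(1)[OF ij(2)] wsk(1)[OF ij(1)]])
    qed
  qed
  moreover have "col W 0 = v" using colW[OF n0] ws0 cnormalize_id[OF v1] by simp
  ultimately show ?thesis by blast
qed

lemma unit_eigenvector_exists:
  fixes A :: "complex mat"
  assumes A: "A \<in> carrier_mat n n" and n: "n > 0"
  shows "\<exists>v a. v \<in> carrier_vec n \<and> v \<bullet>c v = 1 \<and> A *\<^sub>v v = a \<cdot>\<^sub>v v"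
proof -
  obtain as where cp: "char_poly A = (\<Prod>a\<leftarrow>as. [:- a, 1:])" and "length as = n"
    using char_poly_factorized[OF A] by blast
  then obtain a rest where "as = a # rest" using n by (cases as) auto
  then have "eigenvalue A a" using eigenvalue_root_char_poly[OF A] cp by simp
  then obtain v where "eigenvector A v a" unfolding eigenvalue_def by blast
  then have v: "v \<in> carrier_vec n" "v \<noteq> 0\<^sub>v n" and Av: "A *\<^sub>v v = a \<cdot>\<^sub>v v"
    using A unfolding eigenvector_def by auto
  have "A *\<^sub>v cnormalize v = a \<cdot>\<^sub>v cnormalize v"
    unfolding cnormalize_def using mult_mat_vec[OF A v(1)] Av by (simp add: smult_smult_assoc mult.commute)
  then show ?thesis using cnormalize_unit[OF v] v by (intro exI[of _ "cnormalize v"]) auto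
qed

lemma unitary_conj_eigen_col:
  assumes W: "unitary_mat n W" and A: "A \<in> carrier_mat n n" and n: "0 < n"
    and Av: "A *\<^sub>v col W 0 = a \<cdot>\<^sub>v col W 0"
  shows "col (mat_adjoint W * A * W) 0 = a \<cdot>\<^sub>v unit_vec n 0"
proof -
  note U = unitary_matD[OF W]
  have "col (mat_adjoint W * A * W) 0 = mat_adjoint W *\<^sub>v (A *\<^sub>v col W 0)"
    using col_mult2[OF mult_carrier_mat[OF mat_adjoint_carrier[OF U(1)] A] U(1) n]
      assoc_mult_mat_vec[OF mat_adjoint_carrier[OF U(1)] A col_carrier_vec[OF n U(1)]] by simp
  also have "\<dots> = a \<cdot>\<^sub>v (mat_adjoint W *\<^sub>v col W 0)"
    unfolding Av using U n by (simp add: mult_mat_vec[of _ n n])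
  also have "mat_adjoint W *\<^sub>v col W 0 = unit_vec n 0"
    using U n col_mult2[OF mat_adjoint_carrier[OF U(1)] U(1) n] by simp
  finally show ?thesis .
qed

lemma hermitian_deflate:
  assumes "hermitian (Suc m) A"
  shows "\<exists>W a A'. unitary_mat (Suc m) W \<and> hermitian m A' \<and>
    mat_adjoint W * A * W = four_block_mat (mat 1 1 (\<lambda>_. complex_of_real a)) (0\<^sub>m 1 m) (0\<^sub>m m 1) A'"
proof -
  have A: "A \<in> carrier_mat (Suc m) (Suc m)" using assms unfolding hermitian_def by auto
  obtain v e where v: "v \<in> carrier_vec (Suc m)" "v \<bullet>c v = 1" and Av: "A *\<^sub>v v = e \<cdot>\<^sub>v v"
    using unit_eigenvector_exists[OF A] by blast
  obtain W where W: "unitary_mat (Suc m) W" and W0: "col W 0 = v"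
    using unitary_with_first_col[OF v] by blast
  define C where "C = mat_adjoint W * A * W"
  have hC: "hermitian (Suc m) C"
    unfolding C_def by (rule hermitian_unitary_conj[OF assms unitary_matD(1)[OF W]])
  have C: "C \<in> carrier_mat (Suc m) (Suc m)" using hC unfolding hermitian_def by auto
  have col0: "C $$ (i,0) = (if i = 0 then e else 0)" if "i < Suc m" for i
    using arg_cong[OF unitary_conj_eigen_col[OF W A _ Av[folded W0]], of "\<lambda>x. x $ i"] that C
    unfolding C_def[symmetric] by auto
  have row0: "C $$ (0,j) = (if j = 0 then e else 0)" if "j < Suc m" for j
    using hermitian_cnj_entry[OF hC that, of 0] col0[OF that] by auto
  have "Im e = 0" using hermitian_diag_real[OF hC, of 0] col0[of 0] by simp
  then have e: "e = complex_of_real (Re e)" by (simp add: complex_eq_iff)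
  define A' where "A' = mat m m (\<lambda>(i,j). C $$ (Suc i, Suc j))"
  have "hermitian m A'"
  proof (rule hermitianI)
    fix i j assume "i < m" "j < m"
    then show "A' $$ (j,i) = cnj (A' $$ (i,j))"
      using hermitian_cnj_entry[OF hC, of "Suc i" "Suc j"] by (simp add: A'_def)
  qed (simp add: A'_def)
  moreover have "C = four_block_mat (mat 1 1 (\<lambda>_. complex_of_real (Re e))) (0\<^sub>m 1 m) (0\<^sub>m m 1) A'"
    by (rule eq_matI) (use C in \<open>auto simp: A'_def col0 row0 e[symmetric]\<close>)
  ultimately show ?thesis using W unfolding C_def by blast
qed

lemma unitary_four_block:
  assumes "unitary_mat m U"
  shows "unitary_mat (Suc m) (four_block_mat (1\<^sub>m 1) (0\<^sub>m 1 m) (0\<^sub>m m 1) U)"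
proof (rule unitary_matI)
  note U = unitary_matD[OF assms]
  show "four_block_mat (1\<^sub>m 1) (0\<^sub>m 1 m) (0\<^sub>m m 1) U \<in> carrier_mat (Suc m) (Suc m)"
    using four_block_carrier_mat[OF one_carrier_mat[of 1] U(1)] by simp
  show "mat_adjoint (four_block_mat (1\<^sub>m 1) (0\<^sub>m 1 m) (0\<^sub>m m 1) U) * four_block_mat (1\<^sub>m 1) (0\<^sub>m 1 m) (0\<^sub>m m 1) U
    = 1\<^sub>m (Suc m)"
    using U by (simp add: mat_adjoint_four_block[where ra = 1 and ca = 1 and rb = m and cb = m]
        mult_four_block_mat[where ?nr1.0 = 1 and ?n1.0 = 1 and ?nr2.0 = m and ?n2.0 = m and ?nc1.0 = 1 and ?nc2.0 = m])
qed

lemma mat_diag_Suc_four_block: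
  "mat_diag (Suc m) f = four_block_mat (mat 1 1 (\<lambda>_. f 0)) (0\<^sub>m 1 m) (0\<^sub>m m 1) (mat_diag m (\<lambda>i. f (Suc i)))"
  by (rule eq_matI) (auto simp: mat_diag_def)

lemma four_block_diag_mult:
  assumes "A \<in> carrier_mat 1 1" "A' \<in> carrier_mat 1 1" "B \<in> carrier_mat m m" "B' \<in> carrier_mat m m"
  shows "four_block_mat A (0\<^sub>m 1 m) (0\<^sub>m m 1) B * four_block_mat A' (0\<^sub>m 1 m) (0\<^sub>m m 1) B' =
    four_block_mat (A * A') (0\<^sub>m 1 m) (0\<^sub>m m 1) (B * B')"
  using assms
  by (simp add: mult_four_block_mat[where ?nr1.0 = 1 and ?n1.0 = 1 and ?nr2.0 = m and ?n2.0 = m and ?nc1.0 = 1 and ?nc2.0 = m])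

lemma four_block_unitary_conj:
  fixes U A D :: "complex mat"
  assumes U: "U \<in> carrier_mat m m" and A: "A \<in> carrier_mat 1 1" and D: "D \<in> carrier_mat m m"
  shows "four_block_mat (1\<^sub>m 1) (0\<^sub>m 1 m) (0\<^sub>m m 1) U * four_block_mat A (0\<^sub>m 1 m) (0\<^sub>m m 1) D *
      mat_adjoint (four_block_mat (1\<^sub>m 1) (0\<^sub>m 1 m) (0\<^sub>m m 1) U) =
    four_block_mat A (0\<^sub>m 1 m) (0\<^sub>m m 1) (U * D * mat_adjoint U)"
proof -
  have "mat_adjoint (four_block_mat (1\<^sub>m 1) (0\<^sub>m 1 m) (0\<^sub>m m 1) U) =
    four_block_mat (1\<^sub>m 1) (0\<^sub>m 1 m) (0\<^sub>m m 1) (mat_adjoint U)"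
    using U by (subst mat_adjoint_four_block[where ra = 1 and ca = 1 and rb = m and cb = m]) simp_all
  moreover have "four_block_mat (1\<^sub>m 1) (0\<^sub>m 1 m) (0\<^sub>m m 1) U * four_block_mat A (0\<^sub>m 1 m) (0\<^sub>m m 1) D =
    four_block_mat (1\<^sub>m 1 * A) (0\<^sub>m 1 m) (0\<^sub>m m 1) (U * D)"
    by (rule four_block_diag_mult[OF one_carrier_mat A U D])
  ultimately show ?thesis
    using four_block_diag_mult[OF mult_carrier_mat[OF one_carrier_mat A] one_carrier_mat
        mult_carrier_mat[OF U D] mat_adjoint_carrier[OF U]] A
    by simp
qed

theorem hermitian_spectral:
  "hermitian n A \<Longrightarrow> \<exists>U d. unitary_mat n U \<and> A = U * mat_diag n (\<lambda>i. complex_of_real (d i)) * mat_adjoint U"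
proof (induction n arbitrary: A)
  case 0
  then have "A = 1\<^sub>m 0 * mat_diag 0 (\<lambda>i. complex_of_real 0) * mat_adjoint (1\<^sub>m 0)"
    by (intro eq_matI) (auto simp: hermitian_def)
  moreover have "unitary_mat 0 (1\<^sub>m 0)" by (rule unitary_matI) simp_all
  ultimately show ?case by (intro exI conjI) assumption+
next
  case (Suc m)
  obtain W a A' where W: "unitary_mat (Suc m) W" and hA': "hermitian m A'"
    and WAW: "mat_adjoint W * A * W = four_block_mat (mat 1 1 (\<lambda>_. complex_of_real a)) (0\<^sub>m 1 m) (0\<^sub>m m 1) A'"
    using hermitian_deflate[OF Suc.prems] by blast
  obtain U' d' where U': "unitary_mat m U'"
    and A': "A' = U' * mat_diag m (\<lambda>i. complex_of_real (d' i)) * mat_adjoint U'"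
    using Suc.IH[OF hA'] by blast
  define V where "V = four_block_mat (1\<^sub>m 1) (0\<^sub>m 1 m) (0\<^sub>m m 1) U'"
  define D where "D = mat_diag (Suc m) (\<lambda>i. complex_of_real (case_nat a d' i))"
  have V: "unitary_mat (Suc m) V" unfolding V_def by (rule unitary_four_block[OF U'])
  have "V * D * mat_adjoint V = mat_adjoint W * A * W"
    unfolding V_def D_def WAW A' mat_diag_Suc_four_block
    by (subst four_block_unitary_conj[OF unitary_matD(1)[OF U']]) simp_all
  then have "A = W * (V * D * mat_adjoint V) * mat_adjoint W"
    using unitary_conj_cancel(1)[OF W, of A] Suc.prems unfolding hermitian_def by simp
  also have "\<dots> = (W * V) * D * mat_adjoint (W * V)"
    using unitary_matD(1)[OF W] unitary_matD(1)[OF V]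
    by (simp add: D_def mat_adjoint_mult[of W "Suc m" "Suc m" V "Suc m"]
        assoc_mult_mat[of _ "Suc m" "Suc m" _ "Suc m" _ "Suc m"] mult_carrier_mat[of _ "Suc m" "Suc m" _ "Suc m"])
  finally show ?case using unitary_mat_mult[OF W V] unfolding D_def by blast
qed

section \<open>Positive semidefinite matrices\<close>

definition quad_form :: "complex mat \<Rightarrow> complex vec \<Rightarrow> complex" where
  "quad_form A v = conjugate v \<bullet> (A *\<^sub>v v)"

lemma psd_iff_quad_form:
  "psd n A \<longleftrightarrow> A \<in> carrier_mat n n \<and> (\<forall>v \<in> carrier_vec n. 0 \<le> quad_form A v)"
  unfolding psd_def quad_form_def less_eq_complex_def by auto

lemma psd_quad_form_nonneg: "psd n A \<Longrightarrow> v \<in> carrier_vec n \<Longrightarrow> 0 \<le> quad_form A v"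
  unfolding psd_iff_quad_form by blast

lemma psd_carrier: "psd n A \<Longrightarrow> A \<in> carrier_mat n n"
  unfolding psd_def by blast

lemma quad_form_sum:
  assumes "A \<in> carrier_mat n n" "v \<in> carrier_vec n"
  shows "quad_form A v = (\<Sum>i<n. \<Sum>j<n. cnj (v$i) * A $$ (i,j) * v$j)"
  using assms unfolding quad_form_def
  by (simp add: scalar_prod_def lessThan_atLeast0 index_mult_mat_vec_sum[OF assms] sum_distrib_left mult.assoc
      del: index_mult_mat_vec)

lemma sum_two_point:
  assumes "i < (n::nat)" "j < n" "i \<noteq> j"
  shows "(\<Sum>b<n. g b * (if b = i then 1 else if b = j then c else 0)) = g i + g j * (c::complex)"
proof -
  have "(\<Sum>b<n. g b * (if b = i then 1 else if b = j then c else 0)) =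
        (\<Sum>b<n. (if b = i then g b else 0) + (if b = j then g b * c else 0))"
    by (rule sum.cong) (use assms in auto)
  also have "\<dots> = g i + g j * c" using assms by (simp add: sum.distrib sum.delta)
  finally show ?thesis .
qed

lemma quad_form_two_point:
  assumes A: "A \<in> carrier_mat n n" and ij: "i < n" "j < n" "i \<noteq> j"
  shows "quad_form A (vec n (\<lambda>k. if k = i then 1 else if k = j then c else 0)) =
    A $$ (i,i) + A $$ (i,j) * c + cnj c * (A $$ (j,i) + A $$ (j,j) * c)"
proof -
  let ?v = "vec n (\<lambda>k. if k = i then 1 else if k = j then c else 0)"
  have "quad_form A ?v = (\<Sum>a<n. (A $$ (a,i) + A $$ (a,j) * c) * (if a = i then 1 else if a = j then cnj c else 0))"
    unfolding quad_form_sum[OF A vec_carrier]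
  proof (rule sum.cong[OF refl])
    fix a assume "a \<in> {..<n}"
    then have "(\<Sum>b<n. cnj (?v $ a) * A $$ (a,b) * ?v $ b) =
      cnj (?v $ a) * (\<Sum>b<n. A $$ (a,b) * (if b = i then 1 else if b = j then c else 0))"
      by (simp add: sum_distrib_left mult.assoc)
    also have "\<dots> = (A $$ (a,i) + A $$ (a,j) * c) * (if a = i then 1 else if a = j then cnj c else 0)"
      using \<open>a \<in> {..<n}\<close> by (simp add: sum_two_point[OF ij] mult.commute)
    finally show "(\<Sum>b<n. cnj (?v $ a) * A $$ (a,b) * ?v $ b) = \<dots>" .
  qed
  also have "\<dots> = A $$ (i,i) + A $$ (i,j) * c + (A $$ (j,i) + A $$ (j,j) * c) * cnj c"
    by (rule sum_two_point[OF ij])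
  finally show ?thesis by (simp add: mult.commute)
qed

lemma quad_form_unit_vec:
  assumes A: "A \<in> carrier_mat n n" and i: "i < n"
  shows "quad_form A (unit_vec n i) = A $$ (i,i)"
proof -
  have "conjugate (unit_vec n i) = (unit_vec n i :: complex vec)" by (rule eq_vecI) (auto simp: unit_vec_def)
  then show ?thesis unfolding quad_form_def using A i by simp
qed

lemma psd_hermitian:
  assumes "psd n A" shows "hermitian n A"
proof -
  have A: "A \<in> carrier_mat n n" using assms by (rule psd_carrier)
  have real: "Im (quad_form A v) = 0" if "v \<in> carrier_vec n" for v
    using psd_quad_form_nonneg[OF assms that] by (simp add: less_eq_complex_def)
  have diag: "Im (A $$ (i,i)) = 0" if "i < n" for i
    using real[OF unit_vec_carrier, of i] quad_form_unit_vec[OF A that] by simp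
  show ?thesis
  proof (rule hermitianI[OF A])
    fix i j assume ij: "i < n" "j < n"
    show "A $$ (j,i) = cnj (A $$ (i,j))"
    proof (cases "i = j")
      case True
      then show ?thesis using diag[OF ij(1)] by (simp add: complex_eq_iff)
    next
      case False
      have two: "Im (A $$ (i,i) + A $$ (i,j) * c + cnj c * (A $$ (j,i) + A $$ (j,j) * c)) = 0" for c
        using real[OF vec_carrier, of "\<lambda>k. if k = i then 1 else if k = j then c else 0"]
        unfolding quad_form_two_point[OF A ij False] .
      have "Im (A $$ (i,j)) + Im (A $$ (j,i)) = 0" using two[of 1] diag ij by simp
      moreover have "Re (A $$ (i,j)) - Re (A $$ (j,i)) = 0" using two[of \<i>] diag ij by simp
      ultimately show ?thesis by (simp add: complex_eq_iff)
    qed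
  qed
qed

lemma quad_form_unitary_col:
  assumes U: "unitary_mat n U" and A: "A = U * mat_diag n (\<lambda>i. complex_of_real (d i)) * mat_adjoint U"
    and k: "k < n"
  shows "quad_form A (col U k) = complex_of_real (d k)"
proof -
  note Uc = unitary_matD[OF U]
  have Ac: "A \<in> carrier_mat n n" unfolding A using Uc(1) by (rule unitary_diag_carrier)
  have "mat_adjoint U * A * U = mat_diag n (\<lambda>i. complex_of_real (d i))"
    unfolding A by (rule unitary_conj_cancel(2)[OF U mat_diag_dim])
  then have "complex_of_real (d k) = (mat_adjoint U * A * U) $$ (k,k)"
    using k by (simp add: mat_diag_def)
  also have "\<dots> = row (mat_adjoint U) k \<bullet> col (A * U) k"
    unfolding assoc_mult_mat[OF mat_adjoint_carrier[OF Uc(1)] Ac Uc(1)]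
    using Uc(1) Ac k by (subst index_mult_mat) simp_all
  also have "\<dots> = quad_form A (col U k)"
    using k by (simp only: quad_form_def carrier_matD(2)[OF Uc(1)] row_mat_adjoint col_mult2[OF Ac Uc(1) k])
  finally show ?thesis by simp
qed

lemma psd_eigenvalue_nonneg:
  assumes "psd n A" "unitary_mat n U" "A = U * mat_diag n (\<lambda>i. complex_of_real (d i)) * mat_adjoint U"
    and k: "k < n"
  shows "d k \<ge> 0"
  using psd_quad_form_nonneg[OF assms(1) col_carrier_vec[OF k unitary_matD(1)[OF assms(2)]]]
  unfolding quad_form_unitary_col[OF assms(2,3) k] by (simp add: less_eq_complex_def)

lemma psd_spectral:
  assumes "psd n A"
  obtains U d where "unitary_mat n U" "A = U * mat_diag n (\<lambda>i. complex_of_real (d i)) * mat_adjoint U"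
    "\<And>k. k < n \<Longrightarrow> d k \<ge> 0"
  using hermitian_spectral[OF psd_hermitian[OF assms]] psd_eigenvalue_nonneg[OF assms] by blast

lemma mat_diag_mult_vec:
  assumes z: "z \<in> carrier_vec n" shows "mat_diag n f *\<^sub>v z = vec n (\<lambda>k. f k * z $ k)"
proof (rule eq_vecI)
  fix i assume "i < dim_vec (vec n (\<lambda>k. f k * z $ k))"
  then have i: "i < n" by simp
  have "(mat_diag n f *\<^sub>v z) $ i = (\<Sum>k<n. if k = i then f k * z $ k else 0)"
    unfolding index_mult_mat_vec_sum[OF mat_diag_dim z i] by (intro sum.cong refl) (use i in \<open>auto simp: mat_diag_def\<close>)
  then show "(mat_diag n f *\<^sub>v z) $ i = vec n (\<lambda>k. f k * z $ k) $ i" using i by simp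
qed (simp add: mat_diag_def)

lemma psd_quad_form_zero:
  assumes A: "psd n A" and w: "w \<in> carrier_vec n" and q: "quad_form A w = 0"
  shows "A *\<^sub>v w = 0\<^sub>v n"
proof -
  obtain U d where U: "unitary_mat n U" and Ad: "A = U * mat_diag n (\<lambda>i. complex_of_real (d i)) * mat_adjoint U"
    and d: "\<And>k. k < n \<Longrightarrow> d k \<ge> 0" using psd_spectral[OF A] by blast
  note Uc = unitary_matD(1)[OF U]
  define z where "z = mat_adjoint U *\<^sub>v w"
  define Dz where "Dz = vec n (\<lambda>k. complex_of_real (d k) * z $ k)"
  have z: "z \<in> carrier_vec n" unfolding z_def by (rule mult_mat_vec_carrier[OF mat_adjoint_carrier[OF Uc] w])
  have Aw: "A *\<^sub>v w = U *\<^sub>v Dz"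
    unfolding Ad Dz_def z_def
    using assoc_mult_mat_vec[OF mult_carrier_mat[OF Uc mat_diag_dim] mat_adjoint_carrier[OF Uc] w]
      assoc_mult_mat_vec[OF Uc mat_diag_dim z[unfolded z_def]] mat_diag_mult_vec[OF z[unfolded z_def]] by simp
  have "quad_form A w = conjugate z \<bullet> Dz"
    unfolding quad_form_def Aw z_def using Uc w by (simp add: scalar_prod_mat_adjoint[OF Uc w] Dz_def)
  also have "\<dots> = (\<Sum>k<n. complex_of_real (d k) * (z $ k * cnj (z $ k)))"
    using z by (simp add: Dz_def scalar_prod_def lessThan_atLeast0 mult_ac)
  also have "\<dots> = complex_of_real (\<Sum>k<n. d k * ((Re (z $ k))\<^sup>2 + (Im (z $ k))\<^sup>2))"
    by (simp add: complex_mult_cnj)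
  finally have "(\<Sum>k<n. d k * ((Re (z $ k))\<^sup>2 + (Im (z $ k))\<^sup>2)) = 0"
    using q by (metis of_real_eq_0_iff)
  then have "d k * ((Re (z $ k))\<^sup>2 + (Im (z $ k))\<^sup>2) = 0" if "k < n" for k
    using that d by (subst (asm) sum_nonneg_eq_0_iff) auto
  then have "d k = 0 \<or> z $ k = 0" if "k < n" for k
    using that by (auto simp: complex_eq_iff sum_power2_eq_zero_iff)
  then have "Dz = 0\<^sub>v n" unfolding Dz_def by (intro eq_vecI) auto
  then show ?thesis unfolding Aw using Uc by auto
qed

lemma psd_congruence:
  assumes X: "psd n X" and B: "B \<in> carrier_mat m n"
  shows "psd m (B * X * mat_adjoint B)"
  unfolding psd_iff_quad_form
proof (intro conjI ballI)
  have Xc: "X \<in> carrier_mat n n" using X by (rule psd_carrier)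
  show "B * X * mat_adjoint B \<in> carrier_mat m m"
    using mult_carrier_mat[OF mult_carrier_mat[OF B Xc] mat_adjoint_carrier[OF B]] .
  fix v :: "complex vec" assume v: "v \<in> carrier_vec m"
  have "quad_form (B * X * mat_adjoint B) v = conjugate v \<bullet> (B *\<^sub>v (X *\<^sub>v (mat_adjoint B *\<^sub>v v)))"
    unfolding quad_form_def
    using assoc_mult_mat_vec[OF mult_carrier_mat[OF B Xc] mat_adjoint_carrier[OF B] v]
      assoc_mult_mat_vec[OF B Xc mult_mat_vec_carrier[OF mat_adjoint_carrier[OF B] v]] by simp
  also have "\<dots> = quad_form X (mat_adjoint B *\<^sub>v v)"
    unfolding quad_form_def
    by (rule scalar_prod_mat_adjoint[OF B v mult_mat_vec_carrier[OF Xc mult_mat_vec_carrier[OF mat_adjoint_carrier[OF B] v]]])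
  finally show "0 \<le> quad_form (B * X * mat_adjoint B) v"
    using psd_quad_form_nonneg[OF X mult_mat_vec_carrier[OF mat_adjoint_carrier[OF B] v]] by simp
qed

lemma tensor_mat_dim[simp]:
  "dim_row (tensor_mat A B) = dim_row A * dim_row B" "dim_col (tensor_mat A B) = dim_col A * dim_col B"
  unfolding tensor_mat_def by simp_all

lemma tensor_id_carrier: "K \<in> carrier_mat n n \<Longrightarrow> tensor_mat K (1\<^sub>m d) \<in> carrier_mat (n*d) (n*d)"
  unfolding tensor_mat_def carrier_mat_def by simp

lemma index_tensor_id:
  assumes K: "K \<in> carrier_mat n n" and i: "i < n*d" and j: "j < n*d"
  shows "tensor_mat K (1\<^sub>m d) $$ (i,j) = (if i mod d = j mod d then K $$ (i div d, j div d) else 0)"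
  unfolding tensor_mat_def using K i j div_mod_less_mult[OF i] div_mod_less_mult[OF j] by simp

lemma index_mult_tensor_id_right:
  assumes Z: "Z \<in> carrier_mat r (n*d)" and L: "L \<in> carrier_mat n n" and z: "z < r" and b: "b < n" and q: "q < d"
  shows "(Z * tensor_mat L (1\<^sub>m d)) $$ (z, b*d+q) = (\<Sum>e<n. Z $$ (z, e*d+q) * L $$ (e,b))"
proof -
  have j: "b*d+q < n*d" by (rule mult_add_less_mult[OF b q])
  have "(Z * tensor_mat L (1\<^sub>m d)) $$ (z, b*d+q) = (\<Sum>y<n*d. if y mod d = q then Z $$ (z,y) * L $$ (y div d, b) else 0)"
    unfolding index_mult_mat_sum[OF Z tensor_id_carrier[OF L] z j]
    by (intro sum.cong refl) (use q in \<open>simp add: index_tensor_id[OF L _ j]\<close>)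
  also have "\<dots> = (\<Sum>e<n. Z $$ (z, e*d+q) * L $$ (e,b))" using q by (simp add: sum_lessThan_mult_mod_eq)
  finally show ?thesis .
qed

lemma index_tensor_id_mult_left:
  assumes K: "K \<in> carrier_mat n n" and Z: "Z \<in> carrier_mat (n*d) c" and a: "a < n" and p: "p < d" and y: "y < c"
  shows "(tensor_mat K (1\<^sub>m d) * Z) $$ (a*d+p, y) = (\<Sum>e<n. K $$ (a,e) * Z $$ (e*d+p, y))"
proof -
  have i: "a*d+p < n*d" by (rule mult_add_less_mult[OF a p])
  have "(tensor_mat K (1\<^sub>m d) * Z) $$ (a*d+p, y) = (\<Sum>x<n*d. if x mod d = p then K $$ (a, x div d) * Z $$ (x,y) else 0)"
    unfolding index_mult_mat_sum[OF tensor_id_carrier[OF K] Z i y]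
    by (intro sum.cong refl) (use p in \<open>auto simp: index_tensor_id[OF K i]\<close>)
  also have "\<dots> = (\<Sum>e<n. K $$ (a,e) * Z $$ (e*d+p, y))" using p by (simp add: sum_lessThan_mult_mod_eq)
  finally show ?thesis .
qed

lemma index_tensor_id_conj:
  assumes K: "K \<in> carrier_mat n n" and L: "L \<in> carrier_mat n n" and Z: "Z \<in> carrier_mat (n*d) (n*d)"
    and a: "a < n" and b: "b < n" and p: "p < d" and q: "q < d"
  shows "(tensor_mat K (1\<^sub>m d) * Z * tensor_mat L (1\<^sub>m d)) $$ (a*d+p, b*d+q) =
    (\<Sum>c<n. \<Sum>e<n. K $$ (a,c) * Z $$ (c*d+p, e*d+q) * L $$ (e,b))"
proof -
  have KZ: "tensor_mat K (1\<^sub>m d) * Z \<in> carrier_mat (n*d) (n*d)" by (rule mult_carrier_mat[OF tensor_id_carrier[OF K] Z])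
  have "(tensor_mat K (1\<^sub>m d) * Z * tensor_mat L (1\<^sub>m d)) $$ (a*d+p, b*d+q) =
    (\<Sum>e<n. (\<Sum>c<n. K $$ (a,c) * Z $$ (c*d+p, e*d+q)) * L $$ (e,b))"
    unfolding index_mult_tensor_id_right[OF KZ L mult_add_less_mult[OF a p] b q]
    by (intro sum.cong refl) (simp add: index_tensor_id_mult_left[OF K Z a p mult_add_less_mult[OF _ q]])
  also have "\<dots> = (\<Sum>e<n. \<Sum>c<n. K $$ (a,c) * Z $$ (c*d+p, e*d+q) * L $$ (e,b))"
    by (simp add: sum_distrib_right)
  also have "\<dots> = (\<Sum>c<n. \<Sum>e<n. K $$ (a,c) * Z $$ (c*d+p, e*d+q) * L $$ (e,b))"
    by (rule sum.swap)
  finally show ?thesis .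
qed

lemma tensor_id_mult:
  assumes K: "K \<in> carrier_mat n n" and L: "L \<in> carrier_mat n n"
  shows "tensor_mat K (1\<^sub>m d) * tensor_mat L (1\<^sub>m d) = tensor_mat (K * L) (1\<^sub>m d)"
proof (rule eq_mat_by_blocks[of _ n d])
  show "tensor_mat K (1\<^sub>m d) * tensor_mat L (1\<^sub>m d) \<in> carrier_mat (n*d) (n*d)"
    by (rule mult_carrier_mat[OF tensor_id_carrier[OF K] tensor_id_carrier[OF L]])
  show "tensor_mat (K * L) (1\<^sub>m d) \<in> carrier_mat (n*d) (n*d)" by (rule tensor_id_carrier[OF mult_carrier_mat[OF K L]])
  fix a b p q assume abpq: "a < n" "b < n" "p < d" "q < d"
  have "(tensor_mat K (1\<^sub>m d) * tensor_mat L (1\<^sub>m d)) $$ (a*d+p, b*d+q) =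
    (\<Sum>e<n. tensor_mat K (1\<^sub>m d) $$ (a*d+p, e*d+q) * L $$ (e,b))"
    by (rule index_mult_tensor_id_right[OF tensor_id_carrier[OF K] L mult_add_less_mult[OF abpq(1,3)] abpq(2,4)])
  also have "\<dots> = (\<Sum>e<n. (if p = q then K $$ (a,e) else 0) * L $$ (e,b))"
    by (intro sum.cong refl) (use abpq in \<open>simp add: index_tensor_id[OF K] mult_add_less_mult\<close>)
  also have "\<dots> = (if p = q then (K * L) $$ (a,b) else 0)"
    by (cases "p = q") (simp_all add: index_mult_mat_sum[OF K L abpq(1,2)] del: index_mult_mat)
  also have "\<dots> = tensor_mat (K * L) (1\<^sub>m d) $$ (a*d+p, b*d+q)"
    unfolding index_tensor_id[OF mult_carrier_mat[OF K L] mult_add_less_mult[OF abpq(1,3)] mult_add_less_mult[OF abpq(2,4)]]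
    using abpq by simp
  finally show "(tensor_mat K (1\<^sub>m d) * tensor_mat L (1\<^sub>m d)) $$ (a*d+p, b*d+q) = tensor_mat (K * L) (1\<^sub>m d) $$ (a*d+p, b*d+q)" .
qed

lemma mat_adjoint_tensor_id:
  assumes K: "K \<in> carrier_mat n n"
  shows "mat_adjoint (tensor_mat K (1\<^sub>m d)) = tensor_mat (mat_adjoint K) (1\<^sub>m d)"
proof (rule eq_matI)
  fix i j assume "i < dim_row (tensor_mat (mat_adjoint K) (1\<^sub>m d))" "j < dim_col (tensor_mat (mat_adjoint K) (1\<^sub>m d))"
  then have ij: "i < n*d" "j < n*d" using K by auto
  then show "mat_adjoint (tensor_mat K (1\<^sub>m d)) $$ (i,j) = tensor_mat (mat_adjoint K) (1\<^sub>m d) $$ (i,j)"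
    using tensor_id_carrier[OF K] div_mod_less_mult[OF ij(1)] div_mod_less_mult[OF ij(2)] K
    by (simp add: index_tensor_id[OF K] index_tensor_id[OF mat_adjoint_carrier[OF K]])
qed (use tensor_id_carrier[OF K, of d] tensor_id_carrier[OF mat_adjoint_carrier[OF K], of d] in auto)

section \<open>Partial trace and the support projection\<close>

definition tensor_unit :: "nat \<Rightarrow> nat \<Rightarrow> complex vec \<Rightarrow> nat \<Rightarrow> complex vec" where
  "tensor_unit n m u p = vec (n*m) (\<lambda>x. if x mod m = p then u $ (x div m) else 0)"

lemma tensor_unit_carrier[simp]: "tensor_unit n m u p \<in> carrier_vec (n*m)"
  unfolding tensor_unit_def by simp

lemma quad_form_tensor_unit:
  assumes V: "V \<in> carrier_mat (n*m) (n*m)" and p: "p < m"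
  shows "quad_form V (tensor_unit n m u p) = (\<Sum>a<n. \<Sum>b<n. cnj (u$a) * V $$ (a*m+p, b*m+p) * u$b)"
proof -
  let ?t = "tensor_unit n m u p"
  have t: "?t $ x = (if x mod m = p then u $ (x div m) else 0)" if "x < n*m" for x
    using that unfolding tensor_unit_def by simp
  have "quad_form V ?t =
    (\<Sum>x<n*m. if x mod m = p then (\<Sum>b<n. cnj (u $ (x div m)) * V $$ (x, b*m+p) * u $ b) else 0)"
    unfolding quad_form_sum[OF V tensor_unit_carrier]
  proof (rule sum.cong[OF refl])
    fix x assume x: "x \<in> {..<n*m}"
    have "(\<Sum>y<n*m. cnj (?t $ x) * V $$ (x,y) * ?t $ y) =
      (\<Sum>y<n*m. if y mod m = p then cnj (?t $ x) * V $$ (x,y) * u $ (y div m) else 0)"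
      by (intro sum.cong refl) (simp add: t)
    also have "\<dots> = (\<Sum>b<n. cnj (?t $ x) * V $$ (x, b*m+p) * u $ b)"
      using p by (simp add: sum_lessThan_mult_mod_eq)
    finally show "(\<Sum>y<n*m. cnj (?t $ x) * V $$ (x,y) * ?t $ y) =
      (if x mod m = p then (\<Sum>b<n. cnj (u $ (x div m)) * V $$ (x, b*m+p) * u $ b) else 0)"
      using x by (simp add: t)
  qed
  also have "\<dots> = (\<Sum>a<n. \<Sum>b<n. cnj (u$a) * V $$ (a*m+p, b*m+p) * u$b)"
    using p by (simp add: sum_lessThan_mult_mod_eq)
  finally show ?thesis .
qed

lemma ptrace_right_carrier[simp]: "ptrace_right n m X \<in> carrier_mat n n"
  unfolding ptrace_right_def by simp

lemma quad_form_ptrace_right: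
  assumes X: "X \<in> carrier_mat (n*m) (n*m)" and u: "u \<in> carrier_vec n"
  shows "quad_form (ptrace_right n m X) u = (\<Sum>p<m. quad_form X (tensor_unit n m u p))"
proof -
  have "quad_form (ptrace_right n m X) u = (\<Sum>a<n. \<Sum>b<n. \<Sum>p<m. cnj (u$a) * X $$ (a*m+p, b*m+p) * u$b)"
    unfolding quad_form_sum[OF ptrace_right_carrier u]
    by (intro sum.cong refl) (simp add: ptrace_right_def sum_distrib_left sum_distrib_right)
  also have "\<dots> = (\<Sum>a<n. \<Sum>p<m. \<Sum>b<n. cnj (u$a) * X $$ (a*m+p, b*m+p) * u$b)"
    by (rule sum.cong[OF refl], rule sum.swap)
  also have "\<dots> = (\<Sum>p<m. \<Sum>a<n. \<Sum>b<n. cnj (u$a) * X $$ (a*m+p, b*m+p) * u$b)"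
    by (rule sum.swap)
  also have "\<dots> = (\<Sum>p<m. quad_form X (tensor_unit n m u p))"
    by (intro sum.cong refl) (simp add: quad_form_tensor_unit[OF X])
  finally show ?thesis .
qed

lemma psd_ptrace_right:
  assumes "psd (n*m) X" shows "psd n (ptrace_right n m X)"
  unfolding psd_iff_quad_form
  using psd_quad_form_nonneg[OF assms tensor_unit_carrier]
  by (simp add: quad_form_ptrace_right[OF psd_carrier[OF assms]] sum_nonneg)

lemma psd_ptrace_right_kernel:
  assumes V: "psd (n*m) V" and u: "u \<in> carrier_vec n"
    and q: "quad_form (ptrace_right n m V) u = 0" and p: "p < m"
  shows "V *\<^sub>v tensor_unit n m u p = 0\<^sub>v (n*m)"
proof (rule psd_quad_form_zero[OF V tensor_unit_carrier])
  have "(\<Sum>p<m. quad_form V (tensor_unit n m u p)) = 0"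
    using q unfolding quad_form_ptrace_right[OF psd_carrier[OF V] u] .
  then show "quad_form V (tensor_unit n m u p) = 0"
    using p psd_quad_form_nonneg[OF V tensor_unit_carrier] by (subst (asm) sum_nonneg_eq_0_iff) auto
qed

definition support_proj :: "nat \<Rightarrow> complex mat \<Rightarrow> (nat \<Rightarrow> real) \<Rightarrow> complex mat" where
  "support_proj n U d = U * mat_diag n (\<lambda>i. complex_of_real (if d i > 0 then 1 else 0)) * mat_adjoint U"

lemma ptrace_right_null_col:
  assumes V: "psd (n*m) V" and U: "unitary_mat n U"
    and Q: "ptrace_right n m V = U * mat_diag n (\<lambda>i. complex_of_real (d i)) * mat_adjoint U"
    and k: "k < n" "\<not> d k > 0" and z: "z < n*m" and q: "q < m"
  shows "(\<Sum>e<n. V $$ (z, e*m+q) * U $$ (e,k)) = 0"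
proof -
  note Uc = unitary_matD(1)[OF U]
  have "d k \<ge> 0" using psd_eigenvalue_nonneg[OF psd_ptrace_right[OF V] U Q k(1)] .
  then have "quad_form (ptrace_right n m V) (col U k) = 0"
    using quad_form_unitary_col[OF U Q k(1)] k(2) by simp
  then have "(V *\<^sub>v tensor_unit n m (col U k) q) $ z = 0"
    using psd_ptrace_right_kernel[OF V col_carrier_vec[OF k(1) Uc]] z q by simp
  moreover have "(V *\<^sub>v tensor_unit n m (col U k) q) $ z = (\<Sum>e<n. V $$ (z, e*m+q) * U $$ (e,k))"
    unfolding index_mult_mat_vec_sum[OF psd_carrier[OF V] tensor_unit_carrier z]
    using k(1) q Uc by (simp add: tensor_unit_def sum_lessThan_mult_mod_eq if_distrib cong: if_cong)
  ultimately show ?thesis by simp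
qed

lemma mult_tensor_support_proj:
  assumes V: "psd (n*m) V" and U: "unitary_mat n U"
    and Q: "ptrace_right n m V = U * mat_diag n (\<lambda>i. complex_of_real (d i)) * mat_adjoint U"
  shows "V * tensor_mat (support_proj n U d) (1\<^sub>m m) = V"
proof (rule eq_mat_by_blocks[of _ n m])
  note Uc = unitary_matD(1)[OF U]
  have Vc: "V \<in> carrier_mat (n*m) (n*m)" using V by (rule psd_carrier)
  have P: "support_proj n U d \<in> carrier_mat n n" unfolding support_proj_def by (rule unitary_diag_carrier[OF Uc])
  show "V * tensor_mat (support_proj n U d) (1\<^sub>m m) \<in> carrier_mat (n*m) (n*m)"
    by (rule mult_carrier_mat[OF Vc tensor_id_carrier[OF P]])
  show "V \<in> carrier_mat (n*m) (n*m)" by (rule Vc)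
  fix a b p q assume a: "a < n" and b: "b < n" and p: "p < m" and q: "q < m"
  define z where "z = a*m+p"
  have z: "z < n*m" unfolding z_def by (rule mult_add_less_mult[OF a p])
  define pk where "pk = (\<lambda>i. complex_of_real (if d i > 0 then 1 else 0))"
  let ?w = "\<lambda>k. \<Sum>e<n. V $$ (z, e*m+q) * U $$ (e,k)"
  have "(V * tensor_mat (support_proj n U d) (1\<^sub>m m)) $$ (z, b*m+q) =
    (\<Sum>e<n. V $$ (z, e*m+q) * support_proj n U d $$ (e,b))"
    by (rule index_mult_tensor_id_right[OF Vc P z b q])
  also have "\<dots> = (\<Sum>e<n. \<Sum>k<n. V $$ (z, e*m+q) * U $$ (e,k) * pk k * cnj (U $$ (b,k)))"
    unfolding support_proj_def pk_def[symmetric]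
    by (intro sum.cong refl) (simp add: index_unitary_diag[OF Uc _ b] sum_distrib_left mult.assoc)
  also have "\<dots> = (\<Sum>k<n. \<Sum>e<n. V $$ (z, e*m+q) * U $$ (e,k) * pk k * cnj (U $$ (b,k)))"
    by (rule sum.swap)
  also have "\<dots> = (\<Sum>k<n. pk k * ?w k * cnj (U $$ (b,k)))"
    by (intro sum.cong refl) (simp add: sum_distrib_left sum_distrib_right mult_ac)
  also have "\<dots> = (\<Sum>k<n. ?w k * cnj (U $$ (b,k)))"
    by (intro sum.cong refl) (use ptrace_right_null_col[OF V U Q _ _ z q] in \<open>auto simp: pk_def\<close>)
  also have "\<dots> = (\<Sum>k<n. \<Sum>e<n. V $$ (z, e*m+q) * (U $$ (e,k) * cnj (U $$ (b,k))))"
    by (simp add: sum_distrib_right mult.assoc)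
  also have "\<dots> = (\<Sum>e<n. V $$ (z, e*m+q) * (\<Sum>k<n. U $$ (e,k) * cnj (U $$ (b,k))))"
    by (subst sum.swap) (simp add: sum_distrib_left)
  also have "\<dots> = V $$ (z, b*m+q)"
    using b by (simp add: unitary_rows_orthonormal[OF U _ b] if_distrib cong: if_cong)
  finally show "(V * tensor_mat (support_proj n U d) (1\<^sub>m m)) $$ (a*m+p, b*m+q) = V $$ (a*m+p, b*m+q)"
    unfolding z_def .
qed

lemma tensor_support_proj_conj:
  assumes V: "psd (n*m) V" and U: "unitary_mat n U"
    and Q: "ptrace_right n m V = U * mat_diag n (\<lambda>i. complex_of_real (d i)) * mat_adjoint U"
  shows "tensor_mat (support_proj n U d) (1\<^sub>m m) * V * tensor_mat (support_proj n U d) (1\<^sub>m m) = V"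
proof -
  let ?P = "tensor_mat (support_proj n U d) (1\<^sub>m m)"
  have Vc: "V \<in> carrier_mat (n*m) (n*m)" and VH: "mat_adjoint V = V"
    using psd_hermitian[OF V] unfolding hermitian_def by auto
  have Pn: "support_proj n U d \<in> carrier_mat n n"
    unfolding support_proj_def by (rule unitary_diag_carrier[OF unitary_matD(1)[OF U]])
  have P: "?P \<in> carrier_mat (n*m) (n*m)" by (rule tensor_id_carrier[OF Pn])
  have PH: "mat_adjoint ?P = ?P"
    unfolding mat_adjoint_tensor_id[OF Pn] unfolding support_proj_def
    by (simp only: mat_adjoint_unitary_diag_real[OF unitary_matD(1)[OF U]])
  have VP: "V * ?P = V" by (rule mult_tensor_support_proj[OF V U Q])
  have "?P * V = mat_adjoint (V * ?P)"
    using mat_adjoint_mult[OF Vc P] by (simp add: PH VH)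
  then have PV: "?P * V = V" unfolding VP VH .
  show ?thesis unfolding PV VP ..
qed

section \<open>Conditional operators\<close>

lemma inv_sqrt_supp_spectral:
  assumes "psd n Q"
  obtains U d where "unitary_mat n U" "Q = U * mat_diag n (\<lambda>i. complex_of_real (d i)) * mat_adjoint U"
    "\<And>k. k < n \<Longrightarrow> d k \<ge> 0"
    "inv_sqrt_supp Q = U * mat_diag n (\<lambda>i. complex_of_real (if d i > 0 then 1 / sqrt (d i) else 0)) * mat_adjoint U"
proof -
  have n: "dim_row Q = n" using psd_carrier[OF assms] by simp
  let ?f = "\<lambda>x::real. if x > 0 then 1 / sqrt x else 0"
  let ?P = "\<lambda>B. \<exists>U d. unitary_mat n U \<and> Q = U * mat_diag n (\<lambda>i. complex_of_real (d i)) * mat_adjoint U \<and>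
      B = U * mat_diag n (\<lambda>i. complex_of_real (?f (d i))) * mat_adjoint U"
  \<comment> \<open>\<open>mat_fun\<close> picks some diagonalisation by choice; the spectral theorem makes the choice non-vacuous.\<close>
  have "\<exists>B. ?P B" using hermitian_spectral[OF psd_hermitian[OF assms]] by blast
  then have "?P (inv_sqrt_supp Q)" unfolding inv_sqrt_supp_def mat_fun_def n by (rule someI_ex)
  then show thesis using psd_eigenvalue_nonneg[OF assms] that by blast
qed

lemma inv_sqrt_supp_hermitian:
  assumes "psd n Q" shows "hermitian n (inv_sqrt_supp Q)"
proof -
  obtain U d where U: "unitary_mat n U"
    and T: "inv_sqrt_supp Q = U * mat_diag n (\<lambda>i. complex_of_real (if d i > 0 then 1 / sqrt (d i) else 0)) * mat_adjoint U"
    using inv_sqrt_supp_spectral[OF assms] by blast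
  show ?thesis unfolding hermitian_def T
    using unitary_diag_carrier[OF unitary_matD(1)[OF U]] mat_adjoint_unitary_diag_real[OF unitary_matD(1)[OF U]] by simp
qed

lemma cond_op_reconstruct:
  assumes \<nu>: "psd (n*m) \<nu>"
  obtains S where "S \<in> carrier_mat n n" "mat_adjoint S = S"
    "tensor_mat S (1\<^sub>m m) * cond_op n m \<nu> * tensor_mat S (1\<^sub>m m) = \<nu>"
proof -
  obtain U d where U: "unitary_mat n U"
    and Q: "ptrace_right n m \<nu> = U * mat_diag n (\<lambda>i. complex_of_real (d i)) * mat_adjoint U"
    and T: "inv_sqrt_supp (ptrace_right n m \<nu>) =
      U * mat_diag n (\<lambda>i. complex_of_real (if d i > 0 then 1 / sqrt (d i) else 0)) * mat_adjoint U"
    using inv_sqrt_supp_spectral[OF psd_ptrace_right[OF \<nu>]] by blast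
  note Uc = unitary_matD(1)[OF U]
  define S where "S = U * mat_diag n (\<lambda>i. complex_of_real (sqrt (d i))) * mat_adjoint U"
  define T where "T = inv_sqrt_supp (ptrace_right n m \<nu>)"
  let ?I = "\<lambda>X. tensor_mat X (1\<^sub>m m)"
  have Sc: "S \<in> carrier_mat n n" unfolding S_def by (rule unitary_diag_carrier[OF Uc])
  have Tc: "T \<in> carrier_mat n n" unfolding T_def T by (rule unitary_diag_carrier[OF Uc])
  have SH: "mat_adjoint S = S" unfolding S_def by (rule mat_adjoint_unitary_diag_real[OF Uc])
  have sqrt_inv: "(\<lambda>i. complex_of_real (sqrt (d i)) * complex_of_real (if d i > 0 then 1 / sqrt (d i) else 0)) =
    (\<lambda>i. complex_of_real (if d i > 0 then 1 else 0))" by (rule ext) simp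
  have ST: "S * T = support_proj n U d" and TS: "T * S = support_proj n U d"
    unfolding S_def T_def T unitary_diag_mult[OF U] support_proj_def sqrt_inv mult.commute[of "complex_of_real (if _ then _ else _)"]
    by simp_all
  have "?I S * cond_op n m \<nu> * ?I S = (?I S * ?I T) * \<nu> * (?I T * ?I S)"
    unfolding cond_op_def Let_def T_def[symmetric]
    using tensor_id_carrier[OF Sc] tensor_id_carrier[OF Tc] psd_carrier[OF \<nu>]
    by (simp add: assoc_mult_mat[of _ "n*m" "n*m" _ "n*m" _ "n*m"] mult_carrier_mat[of _ "n*m" "n*m" _ "n*m"])
  also have "\<dots> = \<nu>"
    unfolding tensor_id_mult[OF Sc Tc] tensor_id_mult[OF Tc Sc] ST TS by (rule tensor_support_proj_conj[OF \<nu> U Q])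
  finally show thesis using Sc SH by (intro that)
qed

section \<open>Channels acting on one factor\<close>

lemma quantum_channelD:
  assumes "quantum_channel dI dO M"
  shows "\<And>X. X \<in> carrier_mat dI dI \<Longrightarrow> M X \<in> carrier_mat dO dO"
    and "\<And>X Y. X \<in> carrier_mat dI dI \<Longrightarrow> Y \<in> carrier_mat dI dI \<Longrightarrow> M (X + Y) = M X + M Y"
    and "\<And>X c. X \<in> carrier_mat dI dI \<Longrightarrow> M (c \<cdot>\<^sub>m X) = c \<cdot>\<^sub>m M X"
    and "\<And>X. X \<in> carrier_mat dI dI \<Longrightarrow> mtrace (M X) = mtrace X"
    and "\<And>n X. psd (n*dI) X \<Longrightarrow> psd (n*dO) (ext_chan n dI dO M X)"
  using assms unfolding quantum_channel_def by blast+

definition mat_unit :: "nat \<Rightarrow> nat \<Rightarrow> nat \<Rightarrow> complex mat" where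
  "mat_unit d k l = mat d d (\<lambda>(i,j). if i = k \<and> j = l then 1 else 0)"

lemma quantum_channel_entry:
  assumes ch: "quantum_channel dI dO M" and X: "X \<in> carrier_mat dI dI" and p: "p < dO" and q: "q < dO"
  shows "M X $$ (p,q) = (\<Sum>k<dI. \<Sum>l<dI. X $$ (k,l) * M (mat_unit dI k l) $$ (p,q))"
proof -
  note c = quantum_channelD[OF ch]
  define Xs where "Xs = (\<lambda>S. mat dI dI (\<lambda>(i,j). if (i,j) \<in> S then X $$ (i,j) else 0))"
  have Xsc: "Xs S \<in> carrier_mat dI dI" for S unfolding Xs_def by simp
  have Ec: "mat_unit dI k l \<in> carrier_mat dI dI" for k l unfolding mat_unit_def by simp
  have main: "finite S \<Longrightarrow> M (Xs S) $$ (p,q) = (\<Sum>(k,l)\<in>S. X $$ (k,l) * M (mat_unit dI k l) $$ (p,q))" for S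
  proof (induction S rule: finite_induct)
    case empty
    have "Xs {} = 0\<^sub>m dI dI" by (rule eq_matI) (simp_all add: Xs_def)
    moreover have "M (0\<^sub>m dI dI) $$ (p,q) = (0 \<cdot>\<^sub>m M (0\<^sub>m dI dI)) $$ (p,q)"
      by (subst c(3)[OF zero_carrier_mat, symmetric]) simp
    moreover have "(0 \<cdot>\<^sub>m M (0\<^sub>m dI dI)) $$ (p,q) = 0" using c(1)[OF zero_carrier_mat] p q by simp
    ultimately show ?case by simp
  next
    case (insert x F)
    obtain k l where x: "x = (k,l)" by (cases x)
    have "Xs (insert x F) = Xs F + X $$ (k,l) \<cdot>\<^sub>m mat_unit dI k l"
      by (rule eq_matI) (use insert.hyps(2) x in \<open>auto simp: Xs_def mat_unit_def\<close>)
    then have "M (Xs (insert x F)) = M (Xs F) + X $$ (k,l) \<cdot>\<^sub>m M (mat_unit dI k l)"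
      using c(2)[OF Xsc smult_carrier_mat[OF Ec]] c(3)[OF Ec] by simp
    then show ?case using insert c(1)[OF Xsc[of F]] c(1)[OF Ec[of k l]] p q x by simp
  qed
  have "Xs ({..<dI} \<times> {..<dI}) = X" by (rule eq_matI) (use X in \<open>auto simp: Xs_def\<close>)
  then show ?thesis using main[of "{..<dI} \<times> {..<dI}"] by (simp add: sum.cartesian_product)
qed

lemma ext_chan_carrier: "ext_chan n dI dO M X \<in> carrier_mat (n*dO) (n*dO)"
  unfolding ext_chan_def by simp

lemma index_ext_chan_block:
  assumes "a < n" "p < dO" "b < n" "q < dO"
  shows "ext_chan n dI dO M X $$ (a*dO+p, b*dO+q) = M (mat dI dI (\<lambda>(k,l). X $$ (a*dI+k, b*dI+l))) $$ (p,q)"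
  unfolding ext_chan_def using assms mult_add_less_mult[of a n p dO] mult_add_less_mult[of b n q dO] by simp

lemma index_ext_chan:
  assumes ch: "quantum_channel dI dO M" and a: "a < n" and p: "p < dO" and b: "b < n" and q: "q < dO"
  shows "ext_chan n dI dO M X $$ (a*dO+p, b*dO+q) =
     (\<Sum>k<dI. \<Sum>l<dI. X $$ (a*dI+k, b*dI+l) * M (mat_unit dI k l) $$ (p,q))"
  unfolding index_ext_chan_block[OF a p b q] by (subst quantum_channel_entry[OF ch _ p q]) simp_all

lemma ext_chan_tensor_id_conj:
  assumes ch: "quantum_channel dI dO M" and K: "K \<in> carrier_mat n n" and L: "L \<in> carrier_mat n n"
    and X: "X \<in> carrier_mat (n*dI) (n*dI)"
  shows "ext_chan n dI dO M (tensor_mat K (1\<^sub>m dI) * X * tensor_mat L (1\<^sub>m dI)) =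
         tensor_mat K (1\<^sub>m dO) * ext_chan n dI dO M X * tensor_mat L (1\<^sub>m dO)"
proof (rule eq_mat_by_blocks[of _ n dO])
  show "tensor_mat K (1\<^sub>m dO) * ext_chan n dI dO M X * tensor_mat L (1\<^sub>m dO) \<in> carrier_mat (n*dO) (n*dO)"
    by (rule mult_carrier_mat[OF mult_carrier_mat[OF tensor_id_carrier[OF K] ext_chan_carrier] tensor_id_carrier[OF L]])
  fix a b p q assume a: "a < n" and b: "b < n" and p: "p < dO" and q: "q < dO"
  let ?c = "\<lambda>k l. M (mat_unit dI k l) $$ (p,q)"
  have "ext_chan n dI dO M (tensor_mat K (1\<^sub>m dI) * X * tensor_mat L (1\<^sub>m dI)) $$ (a*dO+p, b*dO+q) =
    (\<Sum>k<dI. \<Sum>l<dI. \<Sum>c<n. \<Sum>e<n. K $$ (a,c) * (X $$ (c*dI+k, e*dI+l) * ?c k l) * L $$ (e,b))"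
    unfolding index_ext_chan[OF ch a p b q]
    by (intro sum.cong refl) (simp add: index_tensor_id_conj[OF K L X a b] sum_distrib_left sum_distrib_right mult_ac)
  also have "\<dots> = (\<Sum>c<n. \<Sum>e<n. \<Sum>k<dI. \<Sum>l<dI. K $$ (a,c) * (X $$ (c*dI+k, e*dI+l) * ?c k l) * L $$ (e,b))"
    by (rule sum_swap_pairs)
  also have "\<dots> = (\<Sum>c<n. \<Sum>e<n. K $$ (a,c) * ext_chan n dI dO M X $$ (c*dO+p, e*dO+q) * L $$ (e,b))"
    by (intro sum.cong refl) (simp add: index_ext_chan[OF ch _ p _ q] sum_distrib_left sum_distrib_right)
  also have "\<dots> = (tensor_mat K (1\<^sub>m dO) * ext_chan n dI dO M X * tensor_mat L (1\<^sub>m dO)) $$ (a*dO+p, b*dO+q)"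
    by (rule index_tensor_id_conj[OF K L ext_chan_carrier a b p q, symmetric])
  finally show "ext_chan n dI dO M (tensor_mat K (1\<^sub>m dI) * X * tensor_mat L (1\<^sub>m dI)) $$ (a*dO+p, b*dO+q) =
     (tensor_mat K (1\<^sub>m dO) * ext_chan n dI dO M X * tensor_mat L (1\<^sub>m dO)) $$ (a*dO+p, b*dO+q)" .
qed (rule ext_chan_carrier)

lemma mtrace_ext_chan:
  assumes ch: "quantum_channel dI dO M" and X: "X \<in> carrier_mat (n*dI) (n*dI)"
  shows "mtrace (ext_chan n dI dO M X) = mtrace X"
proof -
  note c = quantum_channelD[OF ch]
  let ?B = "\<lambda>a. mat dI dI (\<lambda>(k,l). X $$ (a*dI+k, a*dI+l))"
  have "mtrace (ext_chan n dI dO M X) = (\<Sum>a<n. \<Sum>p<dO. M (?B a) $$ (p,p))"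
    unfolding mtrace_def using ext_chan_carrier[of n dI dO M X]
    by (simp add: sum_lessThan_mult_nat index_ext_chan_block del: index_mult_mat)
  also have "\<dots> = (\<Sum>a<n. mtrace (M (?B a)))"
  proof (intro sum.cong refl)
    fix a
    have "dim_row (M (?B a)) = dO" using c(1)[of "?B a"] by simp
    then show "(\<Sum>p<dO. M (?B a) $$ (p,p)) = mtrace (M (?B a))" by (simp add: mtrace_def)
  qed
  also have "\<dots> = (\<Sum>a<n. mtrace (?B a))"
    using c(4) by simp
  also have "\<dots> = mtrace X"
    unfolding mtrace_def using X by (simp add: sum_lessThan_mult_nat)
  finally show ?thesis .
qed

lemma ext_chan_same_cond_op:
  assumes ch: "quantum_channel dI dO M" and \<omega>: "psd (n*dI) \<omega>" and \<nu>: "psd (n*dO) \<nu>"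
    and cond: "cond_op n dO \<nu> = cond_op n dO (ext_chan n dI dO M \<omega>)"
  obtains K where "K \<in> carrier_mat n n"
    "ext_chan n dI dO M (tensor_mat K (1\<^sub>m dI) * \<omega> * mat_adjoint (tensor_mat K (1\<^sub>m dI))) = \<nu>"
proof -
  let ?\<rho> = "ext_chan n dI dO M \<omega>"
  let ?I = "\<lambda>X. tensor_mat X (1\<^sub>m dO)"
  have \<rho>: "psd (n*dO) ?\<rho>" using quantum_channelD(5)[OF ch \<omega>] .
  obtain S where Sc: "S \<in> carrier_mat n n" and SH: "mat_adjoint S = S"
    and recon: "?I S * cond_op n dO \<nu> * ?I S = \<nu>"
    using cond_op_reconstruct[OF \<nu>] by blast
  define T where "T = inv_sqrt_supp (ptrace_right n dO ?\<rho>)"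
  have Tc: "T \<in> carrier_mat n n" and TH: "mat_adjoint T = T"
    using inv_sqrt_supp_hermitian[OF psd_ptrace_right[OF \<rho>]] unfolding hermitian_def T_def by auto
  have ST: "S * T \<in> carrier_mat n n" and TS: "T * S \<in> carrier_mat n n" using Sc Tc by simp_all
  have "ext_chan n dI dO M (tensor_mat (S * T) (1\<^sub>m dI) * \<omega> * mat_adjoint (tensor_mat (S * T) (1\<^sub>m dI))) =
    ?I (S * T) * ?\<rho> * ?I (T * S)"
    unfolding mat_adjoint_tensor_id[OF ST] mat_adjoint_mult[OF Sc Tc] SH TH
    by (rule ext_chan_tensor_id_conj[OF ch ST TS psd_carrier[OF \<omega>]])
  also have "\<dots> = ?I S * (?I T * ?\<rho> * ?I T) * ?I S"
    unfolding tensor_id_mult[OF Sc Tc, symmetric] tensor_id_mult[OF Tc Sc, symmetric]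
    using tensor_id_carrier[OF Sc] tensor_id_carrier[OF Tc] psd_carrier[OF \<rho>]
    by (simp add: assoc_mult_mat[of _ "n*dO" "n*dO" _ "n*dO" _ "n*dO"] mult_carrier_mat[of _ "n*dO" "n*dO" _ "n*dO"])
  also have "\<dots> = \<nu>" using recon[unfolded cond] unfolding cond_op_def Let_def T_def .
  finally show thesis using ST by (intro that)
qed

theorem claimB4:
  fixes dR dA1 dB1 dA2 dB2 :: nat
    and M :: "complex mat \<Rightarrow> complex mat"
    and \<omega> \<rho> \<nu> :: "complex mat"
  assumes chan: "quantum_channel dR (dA2*dB2) M"
    and classical: "classical_output_B dR dA2 dB2 M"
    and nonsig: "\<forall>d' \<omega>R. density (d'*dR) \<omega>R \<longrightarrow>
        ptrace_mid d' dA2 dB2 (ext_chan d' dR (dA2*dB2) M \<omega>R) =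
        tensor_mat (ptrace_right d' dR \<omega>R) (ptrace_left (d'*dA2) dB2 (ext_chan d' dR (dA2*dB2) M \<omega>R))"
    and \<omega>: "density (dA1*dB1*dR) \<omega>"
    and \<rho>: "\<rho> = ext_chan (dA1*dB1) dR (dA2*dB2) M \<omega>"
    and \<nu>: "density (dA1*dB1*dA2*dB2) \<nu>"
    and cond: "cond_op (dA1*dB1) (dA2*dB2) \<nu> = cond_op (dA1*dB1) (dA2*dB2) \<rho>"
    and supp: "supp (ptrace_right (dA1*dB1) (dA2*dB2) \<nu>) = supp (ptrace_right (dA1*dB1) (dA2*dB2) \<rho>)"
  shows "\<exists>\<omega>'. density (dA1*dB1*dR) \<omega>' \<and> ext_chan (dA1*dB1) dR (dA2*dB2) M \<omega>' = \<nu>"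
proof -
  define n where "n = dA1*dB1"
  define dO where "dO = dA2*dB2"
  have ch: "quantum_channel dR dO M" using chan unfolding dO_def .
  have \<omega>n: "psd (n*dR) \<omega>" using \<omega> unfolding n_def density_def by simp
  have \<nu>n: "psd (n*dO) \<nu>" "mtrace \<nu> = 1" using \<nu> unfolding n_def dO_def density_def by (simp_all add: mult.assoc)
  obtain K where K: "K \<in> carrier_mat n n"
    and M\<omega>': "ext_chan n dR dO M (tensor_mat K (1\<^sub>m dR) * \<omega> * mat_adjoint (tensor_mat K (1\<^sub>m dR))) = \<nu>"
    using ext_chan_same_cond_op[OF ch \<omega>n \<nu>n(1)] cond unfolding \<rho> n_def dO_def by blast
  define \<omega>' where "\<omega>' = tensor_mat K (1\<^sub>m dR) * \<omega> * mat_adjoint (tensor_mat K (1\<^sub>m dR))"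
  have "psd (n*dR) \<omega>'" unfolding \<omega>'_def by (rule psd_congruence[OF \<omega>n tensor_id_carrier[OF K]])
  moreover have "mtrace \<omega>' = 1"
    using mtrace_ext_chan[OF ch psd_carrier[OF \<open>psd (n*dR) \<omega>'\<close>]] M\<omega>' \<nu>n(2) unfolding \<omega>'_def by simp
  ultimately show ?thesis using M\<omega>' unfolding \<omega>'_def n_def dO_def density_def by blast
qed

end
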